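(* Let $\mathfrak{X}=\mathfrak{X}_{(\Gamma_q,i_q)_q}$ be a Bourgain–Delbaen space, let $\Gamma'$ be a self-determined subset of $\Gamma$, and let $\mathfrak{X}'=\mathfrak{X}_{(\Gamma'_{q_s},i'_{q_s})_s}$ be the Bourgain–Delbaen space determined by $\Gamma'$ (as described in the context). Let $\gamma\in\Gamma'$ and assume there are a finite subset $F\subseteq\Gamma'$, scalars $(\lambda_\eta)_{\eta\in F}$ and intervals $(E_\eta)_{\eta\in F}$ of $\mathbb{N}$ such that $c_\gamma^*=\sum_{\eta\in F}\lambda_\eta e_\eta^*\circ P_{E_\eta}$ on $\mathfrak{X}$. Then, on $\mathfrak{X}'$, $c_\gamma^{\prime*}=\sum_{\eta\in F}\lambda_\eta e_\eta^*\circ P'_{E'_\eta}$, where for $\eta\in F$, $E'_\eta=\{s:q_s\in E_\eta\}$.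
   Context: Bourgain–Delbaen spaces: given a strictly increasing sequence $(\Gamma_q)_q$ of non-empty finite sets with union $\Gamma$ and linear extension operators $i_q:\ell_\infty(\Gamma_q)\to\ell_\infty(\Gamma)$ ($i_q(x)|_{\Gamma_q}=x$) with $\sup_q\|i_q\|<\infty$ that are compatible (for $p<q$, $i_p=i_q\circ r_q\circ i_p$, with $r_q$ restriction onto $\Gamma_q$), set $\Delta_1=\Gamma_1$, $\Delta_{q+1}=\Gamma_{q+1}\setminus\Gamma_q$, $d_\gamma=i_q(e_\gamma)$ for $\gamma\in\Delta_q$; $\mathfrak{X}_{(\Gamma_q,i_q)_q}$ is the closed span of $\{d_\gamma\}$ in $\ell_\infty(\Gamma)$, with FDD $M_q=\langle d_\gamma:\gamma\in\Delta_q\rangle$ and associated projections $P_E$ onto $\bigoplus_{q\in E}M_q$. $e_\gamma^*$ denotes evaluation at $\gamma$ restricted to the space, $(d_\gamma^* )$ the functionals biorthogonal to $(d_\gamma)$, and $c_\gamma^*=e_\gamma^*-d_\gamma^*$. An infinite $\Gamma'\subseteq\Gamma$ is self-determined if each $d_\gamma^*$, $\gamma\in\Gamma'$, lies in the span of $\{e_\eta^*:\eta\in\Gamma'\}$. For such $\Gamma'$: $\{q:\Gamma'\cap\Delta_q\neq\varnothing\}=\{q_0<q_1<\cdots\}$ (indices $s=0,1,2,\dots$), $\Gamma'_q=\Gamma'\cap\Gamma_q$, $R$ = restriction onto $\Gamma'$, $i'_{q_s}(x)=R(i_{q_s}(x))$ for $x\in\ell_\infty(\Gamma'_{q_s})$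 (extended by zero); $(\Gamma'_{q_s},i'_{q_s})_s$ defines the Bourgain–Delbaen space $\mathfrak{X}'$ with basis vectors $d'_\gamma$ ($\gamma\in\Gamma'$), biorthogonal functionals $d_\gamma^{\prime*}$, $c_\gamma^{\prime*}=e_\gamma^*-d_\gamma^{\prime*}$, FDD $M'_s=\langle d'_\gamma:\gamma\in\Gamma'\cap\Delta_{q_s}\rangle$ and associated projections $P'_{E'}$ onto $\bigoplus_{s\in E'}M'_s$. *)

theory Defs
  imports Complex_Main "HOL-Library.Infinite_Set"
begin

text \<open>Elements of l_infty(Gamma) are
  represented as functions of type 'a => real that vanish outside Gamma.
  A Bourgain--Delbaen datum is a pair (G, I): G q is the q-th set Gamma_q
  (indexed from q = 0) and I q is the extension operator i_q, acting on
  functions supported in G q (i.e. on l_infty(Gamma_q) extended by zero).\<close>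

definition BD_Gamma :: "(nat \<Rightarrow> 'a set) \<Rightarrow> 'a set" where
  "BD_Gamma G = (\<Union>q. G q)"

fun BD_Delta :: "(nat \<Rightarrow> 'a set) \<Rightarrow> nat \<Rightarrow> 'a set" where
  "BD_Delta G 0 = G 0"
| "BD_Delta G (Suc q) = G (Suc q) - G q"

definition restr :: "'a set \<Rightarrow> ('a \<Rightarrow> real) \<Rightarrow> ('a \<Rightarrow> real)" where
  "restr A x = (\<lambda>\<eta>. if \<eta> \<in> A then x \<eta> else 0)"

definition supported :: "'a set \<Rightarrow> ('a \<Rightarrow> real) \<Rightarrow> bool" where
  "supported A x \<longleftrightarrow> (\<forall>\<eta>. \<eta> \<notin> A \<longrightarrow> x \<eta> = 0)"

definition BD_datum :: "(nat \<Rightarrow> 'a set) \<Rightarrow> (nat \<Rightarrow> ('a \<Rightarrow> real) \<Rightarrow> ('a \<Rightarrow> real)) \<Rightarrow> bool" where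
  "BD_datum G I \<longleftrightarrow>
     (\<forall>q. finite (G q) \<and> G q \<noteq> {} \<and> G q \<subset> G (Suc q)) \<and>
     (\<forall>q x. supported (G q) x \<longrightarrow> supported (BD_Gamma G) (I q x)) \<and>
     (\<forall>q x y. supported (G q) x \<longrightarrow> supported (G q) y \<longrightarrow>
          I q (\<lambda>\<eta>. x \<eta> + y \<eta>) = (\<lambda>\<eta>. I q x \<eta> + I q y \<eta>)) \<and>
     (\<forall>q x c. supported (G q) x \<longrightarrow> I q (\<lambda>\<eta>. c * x \<eta>) = (\<lambda>\<eta>. c * I q x \<eta>)) \<and>
     (\<forall>q x. supported (G q) x \<longrightarrow> (\<forall>\<eta>\<in>G q. I q x \<eta> = x \<eta>)) \<and>
     (\<exists>C. \<forall>q x. supported (G q) x \<longrightarrow> (\<forall>\<eta>. \<bar>I q x \<eta>\<bar> \<le> C * (MAX \<zeta>\<in>G q. \<bar>x \<zeta>\<bar>))) \<and>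
     (\<forall>p q x. p < q \<longrightarrow> supported (G p) x \<longrightarrow> I p x = I q (restr (G q) (I p x)))"

definition BD_level :: "(nat \<Rightarrow> 'a set) \<Rightarrow> 'a \<Rightarrow> nat" where
  "BD_level G \<gamma> = (LEAST q. \<gamma> \<in> G q)"

definition BD_d :: "(nat \<Rightarrow> 'a set) \<Rightarrow> (nat \<Rightarrow> ('a \<Rightarrow> real) \<Rightarrow> ('a \<Rightarrow> real)) \<Rightarrow> 'a \<Rightarrow> ('a \<Rightarrow> real)" where
  "BD_d G I \<gamma> = I (BD_level G \<gamma>) (\<lambda>\<eta>. if \<eta> = \<gamma> then 1 else 0)"

definition supn :: "('a \<Rightarrow> real) \<Rightarrow> real" where
  "supn x = (SUP \<eta>. \<bar>x \<eta>\<bar>)"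

definition BD_span :: "(nat \<Rightarrow> 'a set) \<Rightarrow> (nat \<Rightarrow> ('a \<Rightarrow> real) \<Rightarrow> ('a \<Rightarrow> real)) \<Rightarrow> ('a \<Rightarrow> real) set" where
  "BD_span G I = {(\<lambda>\<eta>. \<Sum>\<delta>\<in>F. c \<delta> * BD_d G I \<delta> \<eta>) | F c. finite F \<and> F \<subseteq> BD_Gamma G}"

definition BD_space :: "(nat \<Rightarrow> 'a set) \<Rightarrow> (nat \<Rightarrow> ('a \<Rightarrow> real) \<Rightarrow> ('a \<Rightarrow> real)) \<Rightarrow> ('a \<Rightarrow> real) set" where
  "BD_space G I = {x. \<forall>\<epsilon>>0. \<exists>y\<in>BD_span G I. \<forall>\<eta>. \<bar>x \<eta> - y \<eta>\<bar> \<le> \<epsilon>}"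

text \<open>Biorthogonal functionals d_gamma^*: the bounded linear functionals on the space with
  d_gamma^*(d_delta) = [gamma = delta] (set to 0 off the space to make them unique).\<close>
definition BD_dstar :: "(nat \<Rightarrow> 'a set) \<Rightarrow> (nat \<Rightarrow> ('a \<Rightarrow> real) \<Rightarrow> ('a \<Rightarrow> real)) \<Rightarrow> 'a \<Rightarrow> (('a \<Rightarrow> real) \<Rightarrow> real)" where
  "BD_dstar G I \<gamma> = (THE f.
      (\<forall>x\<in>BD_space G I. \<forall>y\<in>BD_space G I. f (\<lambda>\<eta>. x \<eta> + y \<eta>) = f x + f y) \<and>
      (\<forall>x\<in>BD_space G I. \<forall>c. f (\<lambda>\<eta>. c * x \<eta>) = c * f x) \<and>
      (\<exists>C. \<forall>x\<in>BD_space G I. \<bar>f x\<bar> \<le> C * supn x) \<and>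
      (\<forall>\<delta>\<in>BD_Gamma G. f (BD_d G I \<delta>) = (if \<delta> = \<gamma> then 1 else 0)) \<and>
      (\<forall>x. x \<notin> BD_space G I \<longrightarrow> f x = 0))"

definition BD_cstar :: "(nat \<Rightarrow> 'a set) \<Rightarrow> (nat \<Rightarrow> ('a \<Rightarrow> real) \<Rightarrow> ('a \<Rightarrow> real)) \<Rightarrow> 'a \<Rightarrow> (('a \<Rightarrow> real) \<Rightarrow> real)" where
  "BD_cstar G I \<gamma> = (\<lambda>x. x \<gamma> - BD_dstar G I \<gamma> x)"

text \<open>FDD projections P_E: the bounded linear operator on the space into the space with
  P_E d_delta = d_delta if the level of delta lies in E and 0 otherwise
  (set to 0 off the space to make it unique).\<close>
definition BD_proj :: "(nat \<Rightarrow> 'a set) \<Rightarrow> (nat \<Rightarrow> ('a \<Rightarrow> real) \<Rightarrow> ('a \<Rightarrow> real)) \<Rightarrow> nat set \<Rightarrow> (('a \<Rightarrow> real) \<Rightarrow> ('a \<Rightarrow> real))" where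
  "BD_proj G I E = (THE P.
      (\<forall>x\<in>BD_space G I. P x \<in> BD_space G I) \<and>
      (\<forall>x\<in>BD_space G I. \<forall>y\<in>BD_space G I. P (\<lambda>\<eta>. x \<eta> + y \<eta>) = (\<lambda>\<eta>. P x \<eta> + P y \<eta>)) \<and>
      (\<forall>x\<in>BD_space G I. \<forall>c. P (\<lambda>\<eta>. c * x \<eta>) = (\<lambda>\<eta>. c * P x \<eta>)) \<and>
      (\<exists>C. \<forall>x\<in>BD_space G I. \<forall>\<eta>. \<bar>P x \<eta>\<bar> \<le> C * supn x) \<and>
      (\<forall>\<delta>\<in>BD_Gamma G. P (BD_d G I \<delta>) =
          (if BD_level G \<delta> \<in> E then BD_d G I \<delta> else (\<lambda>_. 0))) \<and>
      (\<forall>x. x \<notin> BD_space G I \<longrightarrow> P x = (\<lambda>_. 0)))"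

definition nat_interval :: "nat set \<Rightarrow> bool" where
  "nat_interval E \<longleftrightarrow> (\<forall>a b c. a \<in> E \<longrightarrow> c \<in> E \<longrightarrow> a \<le> b \<longrightarrow> b \<le> c \<longrightarrow> b \<in> E)"

definition self_determined :: "(nat \<Rightarrow> 'a set) \<Rightarrow> (nat \<Rightarrow> ('a \<Rightarrow> real) \<Rightarrow> ('a \<Rightarrow> real)) \<Rightarrow> 'a set \<Rightarrow> bool" where
  "self_determined G I \<Gamma>' \<longleftrightarrow> \<Gamma>' \<subseteq> BD_Gamma G \<and> infinite \<Gamma>' \<and>
     (\<forall>\<gamma>\<in>\<Gamma>'. \<exists>F a. finite F \<and> F \<subseteq> \<Gamma>' \<and>
        (\<forall>x\<in>BD_space G I. BD_dstar G I \<gamma> x = (\<Sum>\<eta>\<in>F. a \<eta> * x \<eta>)))"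

definition sd_q :: "(nat \<Rightarrow> 'a set) \<Rightarrow> 'a set \<Rightarrow> nat \<Rightarrow> nat" where
  "sd_q G \<Gamma>' = enumerate {q. \<Gamma>' \<inter> BD_Delta G q \<noteq> {}}"

definition sd_G :: "(nat \<Rightarrow> 'a set) \<Rightarrow> 'a set \<Rightarrow> nat \<Rightarrow> 'a set" where
  "sd_G G \<Gamma>' s = \<Gamma>' \<inter> G (sd_q G \<Gamma>' s)"

definition sd_I :: "(nat \<Rightarrow> 'a set) \<Rightarrow> (nat \<Rightarrow> ('a \<Rightarrow> real) \<Rightarrow> ('a \<Rightarrow> real)) \<Rightarrow> 'a set \<Rightarrow> nat \<Rightarrow> ('a \<Rightarrow> real) \<Rightarrow> ('a \<Rightarrow> real)" where
  "sd_I G I \<Gamma>' s x = restr \<Gamma>' (I (sd_q G \<Gamma>' s) x)"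

end

theory Submission
  imports Defs
begin

text \<open>Both sides are bounded linear functionals on the space determined by \<open>\<Gamma>'\<close>, and the
  vectors \<open>d'\<^sub>\<delta>\<close> span a dense subspace of it, so it suffices to compare them on these vectors.
  Self-determination makes \<open>d'\<^sub>\<delta>\<close> the restriction of \<open>d\<^sub>\<delta>\<close> to \<open>\<Gamma>'\<close> and \<open>d\<^sup>*\<^sub>\<gamma>\<close> a combination of
  evaluations at points of \<open>\<Gamma>'\<close>; the same combination is then biorthogonal in the new space,
  so \<open>c'\<^sup>*\<^sub>\<gamma>(d'\<^sub>\<delta>) = c\<^sup>*\<^sub>\<gamma>(d\<^sub>\<delta>)\<close>. The new level \<open>s\<close> of \<open>\<delta>\<close> satisfies \<open>q\<^sub>s = level \<delta>\<close>, so
  \<open>P'\<^sub>E\<^sub>'(d'\<^sub>\<delta>)\<close> is the restriction of \<open>P\<^sub>E(d\<^sub>\<delta>)\<close>, and evaluation at \<open>\<eta> \<in> F \<subseteq> \<Gamma>'\<close> sees no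
  difference. The projections exist because an interval of \<open>\<nat>\<close> is finite or cofinite: \<open>P\<^sub>E\<close> is
  then a finite sum of the rank-one maps \<open>x \<mapsto> d\<^sup>*\<^sub>\<delta>(x) d\<^sub>\<delta>\<close>, or the identity minus such a sum.\<close>

section \<open>Bounded linear functionals on spaces of bounded functions\<close>

definition bdd_fun :: "('a \<Rightarrow> real) \<Rightarrow> bool" where
  "bdd_fun x \<longleftrightarrow> (\<exists>M. \<forall>\<eta>. \<bar>x \<eta>\<bar> \<le> M)"

lemma abs_le_supn: "bdd_fun x \<Longrightarrow> \<bar>x \<eta>\<bar> \<le> supn x"
  unfolding supn_def bdd_fun_def by (rule cSUP_upper) (auto simp: bdd_above_def)

lemma supn_least: "(\<And>\<eta>. \<bar>x \<eta>\<bar> \<le> e) \<Longrightarrow> supn x \<le> e"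
  unfolding supn_def by (rule cSUP_least) auto

lemma supn_nonneg: "bdd_fun x \<Longrightarrow> 0 \<le> supn x"
  using abs_le_supn[of x undefined] by linarith

lemma bdd_fun_add: "bdd_fun x \<Longrightarrow> bdd_fun y \<Longrightarrow> bdd_fun (\<lambda>\<eta>. x \<eta> + y \<eta>)"
  unfolding bdd_fun_def by (meson abs_triangle_ineq add_mono order_trans)

lemma bdd_fun_scale: "bdd_fun x \<Longrightarrow> bdd_fun (\<lambda>\<eta>. c * x \<eta>)"
  unfolding bdd_fun_def by (metis abs_ge_zero abs_mult mult_left_mono)

lemma bdd_fun_sum:
  assumes "finite F" "\<And>i. i \<in> F \<Longrightarrow> bdd_fun (f i)"
  shows "bdd_fun (\<lambda>\<eta>. \<Sum>i\<in>F. f i \<eta>)"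
  using assms
proof (induction F rule: finite_induct)
  case empty
  show ?case unfolding bdd_fun_def by auto
qed (simp add: bdd_fun_add)

definition bounded_function_space :: "('a \<Rightarrow> real) set \<Rightarrow> bool" where
  "bounded_function_space S \<longleftrightarrow> (\<forall>x\<in>S. bdd_fun x) \<and>
     (\<forall>x\<in>S. \<forall>y\<in>S. (\<lambda>\<eta>. x \<eta> + y \<eta>) \<in> S) \<and> (\<forall>x\<in>S. \<forall>c. (\<lambda>\<eta>. c * x \<eta>) \<in> S)"

lemma bounded_function_spaceD:
  assumes "bounded_function_space S"
  shows "\<And>x. x \<in> S \<Longrightarrow> bdd_fun x"
    and "\<And>x y. x \<in> S \<Longrightarrow> y \<in> S \<Longrightarrow> (\<lambda>\<eta>. x \<eta> + y \<eta>) \<in> S"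
    and "\<And>x c. x \<in> S \<Longrightarrow> (\<lambda>\<eta>. c * x \<eta>) \<in> S"
  using assms unfolding bounded_function_space_def by blast+

lemma bounded_function_space_diff:
  assumes "bounded_function_space S" "x \<in> S" "y \<in> S"
  shows "(\<lambda>\<eta>. x \<eta> - y \<eta>) \<in> S"
  using bounded_function_spaceD(2)[OF assms(1,2) bounded_function_spaceD(3)[OF assms(1,3), of "-1"]]
  by simp

definition bounded_linear_functional_on :: "('a \<Rightarrow> real) set \<Rightarrow> (('a \<Rightarrow> real) \<Rightarrow> real) \<Rightarrow> bool" where
  "bounded_linear_functional_on S f \<longleftrightarrow>
     (\<forall>x\<in>S. \<forall>y\<in>S. f (\<lambda>\<eta>. x \<eta> + y \<eta>) = f x + f y) \<and>
     (\<forall>x\<in>S. \<forall>c. f (\<lambda>\<eta>. c * x \<eta>) = c * f x) \<and>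
     (\<exists>C. \<forall>x\<in>S. \<bar>f x\<bar> \<le> C * supn x)"

definition bounded_linear_operator_on ::
    "('a \<Rightarrow> real) set \<Rightarrow> (('a \<Rightarrow> real) \<Rightarrow> ('a \<Rightarrow> real)) \<Rightarrow> bool" where
  "bounded_linear_operator_on S P \<longleftrightarrow>
     (\<forall>x\<in>S. P x \<in> S) \<and>
     (\<forall>x\<in>S. \<forall>y\<in>S. P (\<lambda>\<eta>. x \<eta> + y \<eta>) = (\<lambda>\<eta>. P x \<eta> + P y \<eta>)) \<and>
     (\<forall>x\<in>S. \<forall>c. P (\<lambda>\<eta>. c * x \<eta>) = (\<lambda>\<eta>. c * P x \<eta>)) \<and>
     (\<exists>C. \<forall>x\<in>S. \<forall>\<eta>. \<bar>P x \<eta>\<bar> \<le> C * supn x)"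

lemma bounded_linear_functional_onI:
  assumes "\<And>x y. x \<in> S \<Longrightarrow> y \<in> S \<Longrightarrow> f (\<lambda>\<eta>. x \<eta> + y \<eta>) = f x + f y"
    and "\<And>x c. x \<in> S \<Longrightarrow> f (\<lambda>\<eta>. c * x \<eta>) = c * f x"
    and "\<And>x. x \<in> S \<Longrightarrow> \<bar>f x\<bar> \<le> C * supn x"
  shows "bounded_linear_functional_on S f"
  using assms unfolding bounded_linear_functional_on_def by blast

lemma bounded_linear_functional_on_add:
  "bounded_linear_functional_on S f \<Longrightarrow> x \<in> S \<Longrightarrow> y \<in> S \<Longrightarrow> f (\<lambda>\<eta>. x \<eta> + y \<eta>) = f x + f y"
  unfolding bounded_linear_functional_on_def by blast

lemma bounded_linear_functional_on_scale:
  "bounded_linear_functional_on S f \<Longrightarrow> x \<in> S \<Longrightarrow> f (\<lambda>\<eta>. c * x \<eta>) = c * f x"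
  unfolding bounded_linear_functional_on_def by blast

lemma bounded_linear_functional_on_diff_arg:
  assumes f: "bounded_linear_functional_on S f" and S: "bounded_function_space S"
    and x: "x \<in> S" and y: "y \<in> S"
  shows "f (\<lambda>\<eta>. x \<eta> - y \<eta>) = f x - f y"
proof -
  have "f (\<lambda>\<eta>. x \<eta> - y \<eta>) = f (\<lambda>\<eta>. x \<eta> + -1 * y \<eta>)" by simp
  also have "\<dots> = f x + f (\<lambda>\<eta>. -1 * y \<eta>)"
    by (rule bounded_linear_functional_on_add[OF f x bounded_function_spaceD(3)[OF S y]])
  also have "\<dots> = f x - f y" using bounded_linear_functional_on_scale[OF f y, of "-1"] by simp
  finally show ?thesis .
qed

lemma bounded_linear_functional_on_bound:
  assumes "bounded_linear_functional_on S f" "bounded_function_space S"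
  obtains C where "C \<ge> 0" "\<And>x. x \<in> S \<Longrightarrow> \<bar>f x\<bar> \<le> C * supn x"
proof -
  obtain C where C: "\<forall>x\<in>S. \<bar>f x\<bar> \<le> C * supn x"
    using assms(1) unfolding bounded_linear_functional_on_def by blast
  show ?thesis
  proof (rule that[of "max C 0"])
    fix x assume x: "x \<in> S"
    have "\<bar>f x\<bar> \<le> C * supn x" using C x by blast
    also have "\<dots> \<le> max C 0 * supn x"
      using supn_nonneg[OF bounded_function_spaceD(1)[OF assms(2) x]] by (simp add: mult_right_mono)
    finally show "\<bar>f x\<bar> \<le> max C 0 * supn x" .
  qed simp
qed

lemma bounded_linear_functional_on_eval:
  "bounded_function_space S \<Longrightarrow> bounded_linear_functional_on S (\<lambda>x. x \<gamma>)"
  by (rule bounded_linear_functional_onI[where C=1])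
    (auto intro: abs_le_supn dest: bounded_function_spaceD(1))

lemma bounded_linear_functional_on_diff:
  assumes f: "bounded_linear_functional_on S f" and g: "bounded_linear_functional_on S g"
    and S: "bounded_function_space S"
  shows "bounded_linear_functional_on S (\<lambda>x. f x - g x)"
proof -
  obtain Cf where Cf: "\<And>x. x \<in> S \<Longrightarrow> \<bar>f x\<bar> \<le> Cf * supn x"
    using bounded_linear_functional_on_bound[OF f S] by blast
  obtain Cg where Cg: "\<And>x. x \<in> S \<Longrightarrow> \<bar>g x\<bar> \<le> Cg * supn x"
    using bounded_linear_functional_on_bound[OF g S] by blast
  show ?thesis
  proof (rule bounded_linear_functional_onI[where C="Cf + Cg"])
    fix x assume "x \<in> S"
    with Cf[of x] Cg[of x] show "\<bar>f x - g x\<bar> \<le> (Cf + Cg) * supn x"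
      by (simp add: distrib_right abs_triangle_ineq4 order_trans[OF abs_triangle_ineq4])
  qed (simp_all add: bounded_linear_functional_on_add[OF f] bounded_linear_functional_on_add[OF g]
      bounded_linear_functional_on_scale[OF f] bounded_linear_functional_on_scale[OF g]
      right_diff_distrib)
qed

lemma bounded_linear_functional_on_sum:
  assumes F: "finite F" and f: "\<And>i. i \<in> F \<Longrightarrow> bounded_linear_functional_on S (f i)"
    and S: "bounded_function_space S"
  shows "bounded_linear_functional_on S (\<lambda>x. \<Sum>i\<in>F. c i * f i x)"
proof -
  have "\<forall>i\<in>F. \<exists>C. \<forall>x\<in>S. \<bar>f i x\<bar> \<le> C * supn x"
    using bounded_linear_functional_on_bound[OF f S] by metis
  then obtain C where C: "\<And>i x. i \<in> F \<Longrightarrow> x \<in> S \<Longrightarrow> \<bar>f i x\<bar> \<le> C i * supn x"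
    by (metis bchoice)
  show ?thesis
  proof (rule bounded_linear_functional_onI[where C="\<Sum>i\<in>F. \<bar>c i\<bar> * C i"])
    fix x assume x: "x \<in> S"
    have "\<bar>\<Sum>i\<in>F. c i * f i x\<bar> \<le> (\<Sum>i\<in>F. \<bar>c i\<bar> * (C i * supn x))"
      using C x by (intro order_trans[OF sum_abs sum_mono]) (simp add: abs_mult mult_left_mono)
    also have "\<dots> = (\<Sum>i\<in>F. \<bar>c i\<bar> * C i) * supn x"
      by (simp add: sum_distrib_right mult.assoc)
    finally show "\<bar>\<Sum>i\<in>F. c i * f i x\<bar> \<le> (\<Sum>i\<in>F. \<bar>c i\<bar> * C i) * supn x" .
  next
    fix x y assume "x \<in> S" "y \<in> S"
    then show "(\<Sum>i\<in>F. c i * f i (\<lambda>\<eta>. x \<eta> + y \<eta>)) = (\<Sum>i\<in>F. c i * f i x) + (\<Sum>i\<in>F. c i * f i y)"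
      by (simp add: bounded_linear_functional_on_add[OF f] distrib_left sum.distrib cong: sum.cong)
  next
    fix x a assume "x \<in> S"
    then show "(\<Sum>i\<in>F. c i * f i (\<lambda>\<eta>. a * x \<eta>)) = a * (\<Sum>i\<in>F. c i * f i x)"
      by (simp add: bounded_linear_functional_on_scale[OF f] sum_distrib_left mult.left_commute
          cong: sum.cong)
  qed
qed

lemma bounded_linear_functional_on_zero_outside:
  assumes f: "bounded_linear_functional_on S f" and S: "bounded_function_space S"
  shows "bounded_linear_functional_on S (\<lambda>x. if x \<in> S then f x else 0)"
  using f bounded_function_spaceD(2,3)[OF S] unfolding bounded_linear_functional_on_def
  by simp

lemma bounded_linear_operator_onD:
  assumes "bounded_linear_operator_on S P"
  shows "\<And>x. x \<in> S \<Longrightarrow> P x \<in> S"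
    and "\<And>x y. x \<in> S \<Longrightarrow> y \<in> S \<Longrightarrow> P (\<lambda>\<eta>. x \<eta> + y \<eta>) = (\<lambda>\<eta>. P x \<eta> + P y \<eta>)"
    and "\<And>x c. x \<in> S \<Longrightarrow> P (\<lambda>\<eta>. c * x \<eta>) = (\<lambda>\<eta>. c * P x \<eta>)"
  using assms unfolding bounded_linear_operator_on_def by blast+

lemma bounded_linear_functional_on_coordinate:
  "bounded_linear_operator_on S P \<Longrightarrow> bounded_linear_functional_on S (\<lambda>x. P x \<eta>)"
  unfolding bounded_linear_operator_on_def bounded_linear_functional_on_def by metis

lemma bounded_linear_operator_on_finite_rank:
  assumes D: "finite D" and \<phi>: "\<And>\<delta>. \<delta> \<in> D \<Longrightarrow> bounded_linear_functional_on S (\<phi> \<delta>)"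
    and v: "\<And>\<delta>. \<delta> \<in> D \<Longrightarrow> bdd_fun (v \<delta>)"
    and range: "\<And>c. (\<lambda>\<eta>. \<Sum>\<delta>\<in>D. c \<delta> * v \<delta> \<eta>) \<in> S"
    and S: "bounded_function_space S"
  shows "bounded_linear_operator_on S (\<lambda>x \<eta>. \<Sum>\<delta>\<in>D. \<phi> \<delta> x * v \<delta> \<eta>)"
proof -
  have "\<forall>\<delta>\<in>D. \<exists>C. \<forall>x\<in>S. \<bar>\<phi> \<delta> x\<bar> \<le> C * supn x"
    using bounded_linear_functional_on_bound[OF \<phi> S] by metis
  then obtain C where C: "\<And>\<delta> x. \<delta> \<in> D \<Longrightarrow> x \<in> S \<Longrightarrow> \<bar>\<phi> \<delta> x\<bar> \<le> C \<delta> * supn x"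
    by (metis bchoice)
  have "\<forall>\<delta>\<in>D. \<exists>M. \<forall>\<eta>. \<bar>v \<delta> \<eta>\<bar> \<le> M"
    using v unfolding bdd_fun_def by blast
  then obtain M where M: "\<And>\<delta> \<eta>. \<delta> \<in> D \<Longrightarrow> \<bar>v \<delta> \<eta>\<bar> \<le> M \<delta>"
    by (metis bchoice)
  have bound: "\<bar>\<Sum>\<delta>\<in>D. \<phi> \<delta> x * v \<delta> \<eta>\<bar> \<le> (\<Sum>\<delta>\<in>D. \<bar>C \<delta>\<bar> * M \<delta>) * supn x"
    if x: "x \<in> S" for x \<eta>
  proof -
    have sx: "0 \<le> supn x" using supn_nonneg bounded_function_spaceD(1)[OF S x] by blast
    have "\<bar>\<phi> \<delta> x * v \<delta> \<eta>\<bar> \<le> (\<bar>C \<delta>\<bar> * M \<delta>) * supn x" if \<delta>: "\<delta> \<in> D" for \<delta>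
    proof -
      have "\<bar>\<phi> \<delta> x\<bar> \<le> \<bar>C \<delta>\<bar> * supn x"
        using C[OF \<delta> x] sx by (meson abs_ge_self mult_right_mono order_trans)
      then have "\<bar>\<phi> \<delta> x\<bar> * \<bar>v \<delta> \<eta>\<bar> \<le> (\<bar>C \<delta>\<bar> * supn x) * M \<delta>"
        using M[OF \<delta>] sx by (intro mult_mono) auto
      then show ?thesis by (simp add: abs_mult mult_ac)
    qed
    then show ?thesis
      by (intro order_trans[OF sum_abs]) (simp add: sum_distrib_right sum_mono)
  qed
  note \<phi>_add = bounded_linear_functional_on_add[OF \<phi>] and \<phi>_scale = bounded_linear_functional_on_scale[OF \<phi>]
  have add: "(\<Sum>\<delta>\<in>D. \<phi> \<delta> (\<lambda>\<eta>. x \<eta> + y \<eta>) * v \<delta> \<eta>)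
      = (\<Sum>\<delta>\<in>D. \<phi> \<delta> x * v \<delta> \<eta>) + (\<Sum>\<delta>\<in>D. \<phi> \<delta> y * v \<delta> \<eta>)"
    if "x \<in> S" "y \<in> S" for x y \<eta>
    using that by (simp add: \<phi>_add distrib_right sum.distrib cong: sum.cong)
  have scale: "(\<Sum>\<delta>\<in>D. \<phi> \<delta> (\<lambda>\<eta>. c * x \<eta>) * v \<delta> \<eta>) = c * (\<Sum>\<delta>\<in>D. \<phi> \<delta> x * v \<delta> \<eta>)"
    if "x \<in> S" for x c \<eta>
    using that by (simp add: \<phi>_scale sum_distrib_left mult.assoc cong: sum.cong)
  show ?thesis
    unfolding bounded_linear_operator_on_def
    by (intro conjI ballI allI exI[of _ "\<Sum>\<delta>\<in>D. \<bar>C \<delta>\<bar> * M \<delta>"])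
      (simp_all add: range add scale bound)
qed

lemma bounded_linear_operator_on_id_minus:
  assumes Q: "bounded_linear_operator_on S Q" and S: "bounded_function_space S"
  shows "bounded_linear_operator_on S (\<lambda>x \<eta>. x \<eta> - Q x \<eta>)"
proof -
  obtain C where C: "\<And>x \<eta>. x \<in> S \<Longrightarrow> \<bar>Q x \<eta>\<bar> \<le> C * supn x"
    using Q unfolding bounded_linear_operator_on_def by blast
  have "\<bar>x \<eta> - Q x \<eta>\<bar> \<le> (1 + C) * supn x" if "x \<in> S" for x \<eta>
    using C[OF that, of \<eta>] abs_le_supn[OF bounded_function_spaceD(1)[OF S that], of \<eta>]
    by (simp add: distrib_right)
  then show ?thesis
    unfolding bounded_linear_operator_on_def
    using bounded_linear_operator_onD[OF Q] bounded_function_space_diff[OF S]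
    by (auto simp: fun_eq_iff right_diff_distrib)
qed

lemma bounded_linear_operator_on_zero_outside:
  assumes P: "bounded_linear_operator_on S P" and S: "bounded_function_space S"
  shows "bounded_linear_operator_on S (\<lambda>x. if x \<in> S then P x else (\<lambda>_. 0))"
  using P bounded_function_spaceD(2,3)[OF S] unfolding bounded_linear_operator_on_def
  by simp

section \<open>Spaces spanned by bounded vectors\<close>

definition is_BD_dstar ::
    "(nat \<Rightarrow> 'a set) \<Rightarrow> (nat \<Rightarrow> ('a \<Rightarrow> real) \<Rightarrow> ('a \<Rightarrow> real)) \<Rightarrow> 'a \<Rightarrow> (('a \<Rightarrow> real) \<Rightarrow> real) \<Rightarrow> bool"
  where
  "is_BD_dstar G I \<gamma> f \<longleftrightarrow> bounded_linear_functional_on (BD_space G I) f \<and>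
     (\<forall>\<delta>\<in>BD_Gamma G. f (BD_d G I \<delta>) = (if \<delta> = \<gamma> then 1 else 0)) \<and>
     (\<forall>x. x \<notin> BD_space G I \<longrightarrow> f x = 0)"

definition is_BD_proj ::
    "(nat \<Rightarrow> 'a set) \<Rightarrow> (nat \<Rightarrow> ('a \<Rightarrow> real) \<Rightarrow> ('a \<Rightarrow> real)) \<Rightarrow> nat set \<Rightarrow>
     (('a \<Rightarrow> real) \<Rightarrow> ('a \<Rightarrow> real)) \<Rightarrow> bool"
  where
  "is_BD_proj G I E P \<longleftrightarrow> bounded_linear_operator_on (BD_space G I) P \<and>
     (\<forall>\<delta>\<in>BD_Gamma G. P (BD_d G I \<delta>) = (if BD_level G \<delta> \<in> E then BD_d G I \<delta> else (\<lambda>_. 0))) \<and>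
     (\<forall>x. x \<notin> BD_space G I \<longrightarrow> P x = (\<lambda>_. 0))"

lemma BD_dstar_eq_The: "BD_dstar G I \<gamma> = (THE f. is_BD_dstar G I \<gamma> f)"
  unfolding BD_dstar_def is_BD_dstar_def bounded_linear_functional_on_def conj_assoc ..

lemma BD_proj_eq_The: "BD_proj G I E = (THE P. is_BD_proj G I E P)"
  unfolding BD_proj_def is_BD_proj_def bounded_linear_operator_on_def conj_assoc ..

lemma BD_level_in: "\<delta> \<in> BD_Gamma G \<Longrightarrow> \<delta> \<in> G (BD_level G \<delta>)"
  unfolding BD_level_def BD_Gamma_def by (rule LeastI_ex) blast

lemma BD_level_le: "\<delta> \<in> G q \<Longrightarrow> BD_level G \<delta> \<le> q"
  unfolding BD_level_def by (rule Least_le)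

lemma mem_BD_Gamma: "\<delta> \<in> G q \<Longrightarrow> \<delta> \<in> BD_Gamma G"
  unfolding BD_Gamma_def by blast

lemma finite_BD_levels:
  assumes "\<And>q. finite (G q)" "finite E"
  shows "finite {\<delta>\<in>BD_Gamma G. BD_level G \<delta> \<in> E}"
proof (rule finite_subset)
  show "{\<delta>\<in>BD_Gamma G. BD_level G \<delta> \<in> E} \<subseteq> (\<Union>q\<in>E. G q)"
    by (auto dest: BD_level_in)
qed (use assms in simp)

lemma BD_space_approx:
  assumes "x \<in> BD_space G I" "e > 0"
  obtains y where "y \<in> BD_span G I" "\<And>\<eta>. \<bar>x \<eta> - y \<eta>\<bar> \<le> e"
  using assms unfolding BD_space_def by blast

locale BD_system =
  fixes G :: "nat \<Rightarrow> 'a set" and I :: "nat \<Rightarrow> ('a \<Rightarrow> real) \<Rightarrow> ('a \<Rightarrow> real)"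
  assumes bdd_fun_BD_d: "\<And>\<delta>. \<delta> \<in> BD_Gamma G \<Longrightarrow> bdd_fun (BD_d G I \<delta>)"
begin

lemma BD_sum_in_span:
  "finite F \<Longrightarrow> F \<subseteq> BD_Gamma G \<Longrightarrow> (\<lambda>\<eta>. \<Sum>\<delta>\<in>F. c \<delta> * BD_d G I \<delta> \<eta>) \<in> BD_span G I"
  unfolding BD_span_def by blast

lemma BD_span_add:
  assumes "x \<in> BD_span G I" "y \<in> BD_span G I"
  shows "(\<lambda>\<eta>. x \<eta> + y \<eta>) \<in> BD_span G I"
proof -
  obtain F a where F: "finite F" "F \<subseteq> BD_Gamma G" and x: "x = (\<lambda>\<eta>. \<Sum>\<delta>\<in>F. a \<delta> * BD_d G I \<delta> \<eta>)"
    using assms(1) unfolding BD_span_def by blast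
  obtain F' b where F': "finite F'" "F' \<subseteq> BD_Gamma G" and y: "y = (\<lambda>\<eta>. \<Sum>\<delta>\<in>F'. b \<delta> * BD_d G I \<delta> \<eta>)"
    using assms(2) unfolding BD_span_def by blast
  have extend: "(\<Sum>\<delta>\<in>A. c \<delta> * BD_d G I \<delta> \<eta>) =
      (\<Sum>\<delta>\<in>F \<union> F'. (if \<delta> \<in> A then c \<delta> else 0) * BD_d G I \<delta> \<eta>)"
    if "A \<subseteq> F \<union> F'" for A c \<eta>
    using that F F' by (intro sum.mono_neutral_cong_left) auto
  have "(\<lambda>\<eta>. x \<eta> + y \<eta>) = (\<lambda>\<eta>. \<Sum>\<delta>\<in>F \<union> F'.
      ((if \<delta> \<in> F then a \<delta> else 0) + (if \<delta> \<in> F' then b \<delta> else 0)) * BD_d G I \<delta> \<eta>)"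
    unfolding x y by (subst (1 2) extend) (auto simp: distrib_right sum.distrib)
  then show ?thesis using F F' BD_sum_in_span by auto
qed

lemma BD_span_scale:
  assumes "x \<in> BD_span G I"
  shows "(\<lambda>\<eta>. c * x \<eta>) \<in> BD_span G I"
proof -
  obtain F a where F: "finite F" "F \<subseteq> BD_Gamma G" and x: "x = (\<lambda>\<eta>. \<Sum>\<delta>\<in>F. a \<delta> * BD_d G I \<delta> \<eta>)"
    using assms unfolding BD_span_def by blast
  have "(\<lambda>\<eta>. c * x \<eta>) = (\<lambda>\<eta>. \<Sum>\<delta>\<in>F. (c * a \<delta>) * BD_d G I \<delta> \<eta>)"
    unfolding x by (simp add: sum_distrib_left mult.assoc)
  then show ?thesis using BD_sum_in_span[OF F] by simp
qed

lemma BD_span_subset_space: "BD_span G I \<subseteq> BD_space G I"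
  unfolding BD_space_def by force

lemma BD_d_in_space: "\<delta> \<in> BD_Gamma G \<Longrightarrow> BD_d G I \<delta> \<in> BD_space G I"
  using BD_sum_in_span[of "{\<delta>}" "\<lambda>_. 1"] BD_span_subset_space by auto

lemma bdd_fun_BD_space:
  assumes "x \<in> BD_space G I"
  shows "bdd_fun x"
proof -
  obtain y where y: "y \<in> BD_span G I" "\<And>\<eta>. \<bar>x \<eta> - y \<eta>\<bar> \<le> 1"
    using BD_space_approx[OF assms zero_less_one] by blast
  have "bdd_fun y"
    using y(1) unfolding BD_span_def by (auto intro!: bdd_fun_sum bdd_fun_scale bdd_fun_BD_d)
  then have "bdd_fun (\<lambda>\<eta>. (x \<eta> - y \<eta>) + y \<eta>)"
    using y(2) by (intro bdd_fun_add) (auto simp: bdd_fun_def)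
  then show ?thesis by simp
qed

lemma BD_space_add:
  assumes x: "x \<in> BD_space G I" and y: "y \<in> BD_space G I"
  shows "(\<lambda>\<eta>. x \<eta> + y \<eta>) \<in> BD_space G I"
  unfolding BD_space_def
proof (intro CollectI allI impI)
  fix e :: real assume "e > 0"
  then obtain x' y' where x': "x' \<in> BD_span G I" "\<And>\<eta>. \<bar>x \<eta> - x' \<eta>\<bar> \<le> e / 2"
    and y': "y' \<in> BD_span G I" "\<And>\<eta>. \<bar>y \<eta> - y' \<eta>\<bar> \<le> e / 2"
    using BD_space_approx[OF x] BD_space_approx[OF y] half_gt_zero by metis
  have "\<bar>x \<eta> + y \<eta> - (x' \<eta> + y' \<eta>)\<bar> \<le> e" for \<eta>
    using x'(2)[of \<eta>, unfolded abs_le_iff] y'(2)[of \<eta>, unfolded abs_le_iff]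
    by (simp add: abs_le_iff)
  then show "\<exists>z\<in>BD_span G I. \<forall>\<eta>. \<bar>x \<eta> + y \<eta> - z \<eta>\<bar> \<le> e"
    using BD_span_add[OF x'(1) y'(1)] by (intro bexI[where x="\<lambda>\<eta>. x' \<eta> + y' \<eta>"]) simp_all
qed

lemma BD_space_scale:
  assumes x: "x \<in> BD_space G I"
  shows "(\<lambda>\<eta>. c * x \<eta>) \<in> BD_space G I"
  unfolding BD_space_def
proof (intro CollectI allI impI)
  fix e :: real assume "e > 0"
  then have "e / (\<bar>c\<bar> + 1) > 0" by simp
  then obtain x' where x': "x' \<in> BD_span G I" "\<And>\<eta>. \<bar>x \<eta> - x' \<eta>\<bar> \<le> e / (\<bar>c\<bar> + 1)"
    using BD_space_approx[OF x] by blast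
  have "\<bar>c * x \<eta> - c * x' \<eta>\<bar> \<le> e" for \<eta>
  proof -
    have "\<bar>c * x \<eta> - c * x' \<eta>\<bar> = \<bar>c\<bar> * \<bar>x \<eta> - x' \<eta>\<bar>"
      by (simp add: abs_mult[symmetric] right_diff_distrib)
    also have "\<dots> \<le> (\<bar>c\<bar> + 1) * (e / (\<bar>c\<bar> + 1))"
      using x'(2)[of \<eta>] by (intro mult_mono) auto
    finally show ?thesis by simp
  qed
  then show "\<exists>z\<in>BD_span G I. \<forall>\<eta>. \<bar>c * x \<eta> - z \<eta>\<bar> \<le> e"
    using BD_span_scale[OF x'(1)] by (intro bexI[where x="\<lambda>\<eta>. c * x' \<eta>"]) simp_all
qed

lemma bounded_function_space_BD_space: "bounded_function_space (BD_space G I)"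
  unfolding bounded_function_space_def using bdd_fun_BD_space BD_space_add BD_space_scale by blast

lemma bounded_linear_functional_on_BD_span_sum:
  assumes f: "bounded_linear_functional_on (BD_space G I) f" and F: "finite F" "F \<subseteq> BD_Gamma G"
  shows "f (\<lambda>\<eta>. \<Sum>\<delta>\<in>F. c \<delta> * BD_d G I \<delta> \<eta>) = (\<Sum>\<delta>\<in>F. c \<delta> * f (BD_d G I \<delta>))"
  using F
proof (induction F rule: finite_induct)
  case empty
  have "(\<lambda>_. 0) \<in> BD_space G I"
    using BD_sum_in_span[of "{}"] BD_span_subset_space by auto
  from bounded_linear_functional_on_scale[OF f this, of 0] show ?case by simp
next
  case (insert \<delta> F)
  have "(\<lambda>\<eta>. c \<delta> * BD_d G I \<delta> \<eta>) \<in> BD_space G I" "(\<lambda>\<eta>. \<Sum>\<delta>\<in>F. c \<delta> * BD_d G I \<delta> \<eta>) \<in> BD_space G I"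
    using insert BD_space_scale BD_d_in_space BD_sum_in_span BD_span_subset_space by auto
  with insert show ?case
    by (simp add: bounded_linear_functional_on_add[OF f] bounded_linear_functional_on_scale[OF f]
        BD_d_in_space)
qed

lemma bounded_linear_functional_on_BD_space_vanishing:
  assumes h: "bounded_linear_functional_on (BD_space G I) h"
    and zero: "\<And>\<delta>. \<delta> \<in> BD_Gamma G \<Longrightarrow> h (BD_d G I \<delta>) = 0"
    and x: "x \<in> BD_space G I"
  shows "h x = 0"
proof -
  note S = bounded_function_space_BD_space
  obtain C where C: "C \<ge> 0" "\<And>x. x \<in> BD_space G I \<Longrightarrow> \<bar>h x\<bar> \<le> C * supn x"
    using bounded_linear_functional_on_bound[OF h S] by blast
  have "\<bar>h x\<bar> \<le> 0 + e" if "e > 0" for e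
  proof -
    have "e / (C + 1) > 0" using \<open>e > 0\<close> C(1) by simp
    then obtain y where y: "y \<in> BD_span G I" "\<And>\<eta>. \<bar>x \<eta> - y \<eta>\<bar> \<le> e / (C + 1)"
      using BD_space_approx[OF x] by blast
    have yS: "y \<in> BD_space G I" using y(1) BD_span_subset_space by blast
    have "h y = 0"
      using y(1) zero unfolding BD_span_def
      by (auto simp: bounded_linear_functional_on_BD_span_sum[OF h] subset_iff intro!: sum.neutral)
    then have "h x = h (\<lambda>\<eta>. x \<eta> - y \<eta>)"
      by (simp add: bounded_linear_functional_on_diff_arg[OF h S x yS])
    also have "\<bar>\<dots>\<bar> \<le> C * (e / (C + 1))"
      using C(2)[OF bounded_function_space_diff[OF S x yS]] supn_least[of "\<lambda>\<eta>. x \<eta> - y \<eta>", OF y(2)] C(1)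
      by (meson mult_left_mono order_trans)
    also have "\<dots> \<le> e" using C(1) \<open>e > 0\<close> by (simp add: field_simps)
    finally show ?thesis by simp
  qed
  then show ?thesis using field_le_epsilon by fastforce
qed

lemma bounded_linear_functional_on_BD_space_eqI:
  assumes "bounded_linear_functional_on (BD_space G I) f" "bounded_linear_functional_on (BD_space G I) g"
    and "\<And>\<delta>. \<delta> \<in> BD_Gamma G \<Longrightarrow> f (BD_d G I \<delta>) = g (BD_d G I \<delta>)"
    and "x \<in> BD_space G I"
  shows "f x = g x"
  using bounded_linear_functional_on_BD_space_vanishing[OF
      bounded_linear_functional_on_diff[OF assms(1,2) bounded_function_space_BD_space]] assms(3,4)
  by simp

lemma BD_dstar_eqI:
  assumes f: "is_BD_dstar G I \<gamma> f"
  shows "BD_dstar G I \<gamma> = f"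
  unfolding BD_dstar_eq_The
proof (rule the_equality[where P="is_BD_dstar G I \<gamma>", OF f])
  fix g assume g: "is_BD_dstar G I \<gamma> g"
  show "g = f"
  proof
    fix x show "g x = f x"
      using f g unfolding is_BD_dstar_def
      by (cases "x \<in> BD_space G I") (auto intro: bounded_linear_functional_on_BD_space_eqI)
  qed
qed

lemma BD_proj_eqI:
  assumes P: "is_BD_proj G I E P"
  shows "BD_proj G I E = P"
  unfolding BD_proj_eq_The
proof (rule the_equality[where P="is_BD_proj G I E", OF P])
  fix Q assume Q: "is_BD_proj G I E Q"
  show "Q = P"
  proof (intro ext)
    fix x \<eta> show "Q x \<eta> = P x \<eta>"
      using P Q unfolding is_BD_proj_def
      by (cases "x \<in> BD_space G I")
        (auto intro: bounded_linear_functional_on_BD_space_eqI bounded_linear_functional_on_coordinate)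
  qed
qed

lemma ex_is_BD_proj_finite_levels:
  assumes dstar: "\<And>\<delta>. \<delta> \<in> BD_Gamma G \<Longrightarrow> is_BD_dstar G I \<delta> (BD_dstar G I \<delta>)"
    and D: "finite {\<delta>\<in>BD_Gamma G. BD_level G \<delta> \<in> E}"
  shows "\<exists>P. is_BD_proj G I E P"
proof -
  define D where "D = {\<delta>\<in>BD_Gamma G. BD_level G \<delta> \<in> E}"
  have D\<Gamma>: "D \<subseteq> BD_Gamma G" unfolding D_def by auto
  let ?P = "\<lambda>x \<eta>. \<Sum>\<delta>\<in>D. BD_dstar G I \<delta> x * BD_d G I \<delta> \<eta>"
  have "bounded_linear_operator_on (BD_space G I) ?P"
  proof (rule bounded_linear_operator_on_finite_rank)
    show "(\<lambda>\<eta>. \<Sum>\<delta>\<in>D. c \<delta> * BD_d G I \<delta> \<eta>) \<in> BD_space G I" for c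
      using BD_sum_in_span[OF D[folded D_def] D\<Gamma>] BD_span_subset_space by blast
  qed (use D D\<Gamma> dstar in \<open>auto simp: D_def is_BD_dstar_def bdd_fun_BD_d bounded_function_space_BD_space\<close>)
  moreover have "?P (BD_d G I \<delta>) = (if BD_level G \<delta> \<in> E then BD_d G I \<delta> else (\<lambda>_. 0))"
    if \<delta>: "\<delta> \<in> BD_Gamma G" for \<delta>
  proof
    fix \<eta>
    have "?P (BD_d G I \<delta>) \<eta> = (\<Sum>\<delta>'\<in>D. if \<delta> = \<delta>' then BD_d G I \<delta>' \<eta> else 0)"
      using dstar D\<Gamma> \<delta> by (intro sum.cong) (auto simp: is_BD_dstar_def)
    then show "?P (BD_d G I \<delta>) \<eta> = (if BD_level G \<delta> \<in> E then BD_d G I \<delta> else (\<lambda>_. 0)) \<eta>"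
      using D \<delta> by (simp add: D_def)
  qed
  ultimately have "is_BD_proj G I E (\<lambda>x. if x \<in> BD_space G I then ?P x else (\<lambda>_. 0))"
    unfolding is_BD_proj_def
    by (simp add: bounded_linear_operator_on_zero_outside bounded_function_space_BD_space BD_d_in_space)
  then show ?thesis by (rule exI[where P="is_BD_proj G I E"])
qed

lemma ex_is_BD_proj_cofinite_levels:
  assumes dstar: "\<And>\<delta>. \<delta> \<in> BD_Gamma G \<Longrightarrow> is_BD_dstar G I \<delta> (BD_dstar G I \<delta>)"
    and "finite {\<delta>\<in>BD_Gamma G. BD_level G \<delta> \<in> - E}"
  shows "\<exists>P. is_BD_proj G I E P"
proof -
  obtain Q where Q: "is_BD_proj G I (- E) Q"
    using ex_is_BD_proj_finite_levels[OF dstar assms(2)] by blast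
  have Q_op: "bounded_linear_operator_on (BD_space G I) Q"
    and Q_d: "\<And>\<delta>. \<delta> \<in> BD_Gamma G \<Longrightarrow>
      Q (BD_d G I \<delta>) = (if BD_level G \<delta> \<in> - E then BD_d G I \<delta> else (\<lambda>_. 0))"
    using Q unfolding is_BD_proj_def by blast+
  let ?P = "\<lambda>x. if x \<in> BD_space G I then (\<lambda>\<eta>. x \<eta> - Q x \<eta>) else (\<lambda>_. 0)"
  have "is_BD_proj G I E ?P"
    unfolding is_BD_proj_def
  proof (intro conjI ballI allI impI)
    show "bounded_linear_operator_on (BD_space G I) ?P"
      by (intro bounded_linear_operator_on_zero_outside bounded_linear_operator_on_id_minus Q_op
          bounded_function_space_BD_space)
    show "?P (BD_d G I \<delta>) = (if BD_level G \<delta> \<in> E then BD_d G I \<delta> else (\<lambda>_. 0))"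
      if "\<delta> \<in> BD_Gamma G" for \<delta>
      using Q_d[OF that] BD_d_in_space[OF that] by auto
  qed simp
  then show ?thesis by (rule exI[where P="is_BD_proj G I E"])
qed

lemma is_BD_proj_BD_proj:
  assumes dstar: "\<And>\<delta>. \<delta> \<in> BD_Gamma G \<Longrightarrow> is_BD_dstar G I \<delta> (BD_dstar G I \<delta>)"
    and G: "\<And>q. finite (G q)" and E: "finite E \<or> finite (- E)"
  shows "is_BD_proj G I E (BD_proj G I E)"
proof -
  from E have "\<exists>P. is_BD_proj G I E P"
  proof
    assume "finite E"
    show ?thesis by (rule ex_is_BD_proj_finite_levels[OF dstar finite_BD_levels[OF G \<open>finite E\<close>]])
  next
    assume "finite (- E)"
    show ?thesis
      by (rule ex_is_BD_proj_cofinite_levels[OF dstar finite_BD_levels[OF G \<open>finite (- E)\<close>]])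
  qed
  then show ?thesis using BD_proj_eqI by blast
qed

end

section \<open>Bourgain--Delbaen data\<close>

lemma BD_level_in_Delta:
  assumes "\<delta> \<in> BD_Gamma G"
  shows "\<delta> \<in> BD_Delta G (BD_level G \<delta>)"
proof (cases "BD_level G \<delta>")
  case 0
  then show ?thesis using BD_level_in[OF assms] by simp
next
  case (Suc p)
  then have "\<delta> \<notin> G p" using BD_level_le[of \<delta> G p] by auto
  then show ?thesis using BD_level_in[OF assms] Suc by simp
qed

lemma restr_add: "restr A (\<lambda>\<eta>. x \<eta> + y \<eta>) = (\<lambda>\<eta>. restr A x \<eta> + restr A y \<eta>)"
  by (simp add: restr_def fun_eq_iff)

lemma restr_scale: "restr A (\<lambda>\<eta>. c * x \<eta>) = (\<lambda>\<eta>. c * restr A x \<eta>)"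
  by (simp add: restr_def fun_eq_iff)

lemma bdd_fun_restr:
  assumes "bdd_fun x"
  shows "bdd_fun (restr A x)"
proof -
  obtain M where M: "\<And>\<eta>. \<bar>x \<eta>\<bar> \<le> M" using assms unfolding bdd_fun_def by blast
  then have "0 \<le> M" by (rule order_trans[OF abs_ge_zero])
  with M have "\<bar>restr A x \<eta>\<bar> \<le> M" for \<eta> by (simp add: restr_def)
  then show ?thesis unfolding bdd_fun_def by blast
qed

lemma supported_restr: "supported A (restr A x)"
  by (simp add: supported_def restr_def)

locale Bourgain_Delbaen =
  fixes G :: "nat \<Rightarrow> 'a set" and I :: "nat \<Rightarrow> ('a \<Rightarrow> real) \<Rightarrow> ('a \<Rightarrow> real)"
  assumes datum: "BD_datum G I"
begin

lemma finite_G: "finite (G q)"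
  and G_nonempty: "G q \<noteq> {}"
  and G_subset_Suc: "G q \<subseteq> G (Suc q)"
  using datum[unfolded BD_datum_def, THEN conjunct1, rule_format, of q] by auto

lemma G_mono: "p \<le> q \<Longrightarrow> G p \<subseteq> G q"
  by (rule lift_Suc_mono_le[of G, OF G_subset_Suc])

lemma I_add:
  "supported (G q) x \<Longrightarrow> supported (G q) y \<Longrightarrow> I q (\<lambda>\<eta>. x \<eta> + y \<eta>) = (\<lambda>\<eta>. I q x \<eta> + I q y \<eta>)"
  using datum unfolding BD_datum_def by (elim conjE) blast

lemma I_scale: "supported (G q) x \<Longrightarrow> I q (\<lambda>\<eta>. c * x \<eta>) = (\<lambda>\<eta>. c * I q x \<eta>)"
  using datum unfolding BD_datum_def by (elim conjE) blast

lemma I_extends: "supported (G q) x \<Longrightarrow> \<eta> \<in> G q \<Longrightarrow> I q x \<eta> = x \<eta>"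
  using datum unfolding BD_datum_def by (elim conjE) blast

lemma I_compatible: "p < q \<Longrightarrow> supported (G p) x \<Longrightarrow> I p x = I q (restr (G q) (I p x))"
  using datum unfolding BD_datum_def by (elim conjE) blast

lemma I_zero: "I q (\<lambda>_. 0) = (\<lambda>_. 0)"
  using I_scale[of q "\<lambda>_. 0" 0] by (simp add: supported_def)

lemma I_bounded:
  obtains K where "K \<ge> 0"
    "\<And>q x B \<eta>. supported (G q) x \<Longrightarrow> (\<And>\<zeta>. \<bar>x \<zeta>\<bar> \<le> B) \<Longrightarrow> \<bar>I q x \<eta>\<bar> \<le> K * B"
proof -
  obtain C where C: "\<forall>q x. supported (G q) x \<longrightarrow> (\<forall>\<eta>. \<bar>I q x \<eta>\<bar> \<le> C * (MAX \<zeta>\<in>G q. \<bar>x \<zeta>\<bar>))"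
    using datum unfolding BD_datum_def by (elim conjE) blast
  show ?thesis
  proof (rule that[of "max C 0"])
    fix q x B \<eta> assume x: "supported (G q) x" and B: "\<And>\<zeta>. \<bar>x \<zeta>\<bar> \<le> B"
    have M: "0 \<le> (MAX \<zeta>\<in>G q. \<bar>x \<zeta>\<bar>)" "(MAX \<zeta>\<in>G q. \<bar>x \<zeta>\<bar>) \<le> B"
      using finite_G[of q] G_nonempty[of q] B by (auto simp: Max_ge_iff ex_in_conv[symmetric])
    have "\<bar>I q x \<eta>\<bar> \<le> C * (MAX \<zeta>\<in>G q. \<bar>x \<zeta>\<bar>)" using C x by blast
    also have "\<dots> \<le> max C 0 * (MAX \<zeta>\<in>G q. \<bar>x \<zeta>\<bar>)" using M(1) by (simp add: mult_right_mono)
    also have "\<dots> \<le> max C 0 * B" using M(2) by (simp add: mult_left_mono)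
    finally show "\<bar>I q x \<eta>\<bar> \<le> max C 0 * B" .
  qed simp
qed

lemma mem_G_iff_BD_level_le:
  assumes "\<delta> \<in> BD_Gamma G"
  shows "\<delta> \<in> G q \<longleftrightarrow> BD_level G \<delta> \<le> q"
  using BD_level_le[of \<delta> G q] G_mono[of "BD_level G \<delta>" q] BD_level_in[OF assms] by auto

lemma BD_d_below_level:
  assumes "\<delta> \<in> BD_Gamma G" "\<eta> \<in> G (BD_level G \<delta>)"
  shows "BD_d G I \<delta> \<eta> = (if \<eta> = \<delta> then 1 else 0)"
  unfolding BD_d_def
  using I_extends[OF _ assms(2)] BD_level_in[OF assms(1)] by (simp add: supported_def)

lemma restr_BD_d_below_level:
  assumes "\<delta> \<in> BD_Gamma G" "q < BD_level G \<delta>"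
  shows "restr (G q) (BD_d G I \<delta>) = (\<lambda>_. 0)"
proof
  fix \<eta>
  have "\<eta> \<in> G q \<Longrightarrow> \<eta> \<in> G (BD_level G \<delta>) \<and> \<eta> \<noteq> \<delta>"
    using assms G_mono[of q "BD_level G \<delta>"] mem_G_iff_BD_level_le[OF assms(1), of q] by auto
  then show "restr (G q) (BD_d G I \<delta>) \<eta> = 0"
    using BD_d_below_level[OF assms(1)] by (auto simp: restr_def)
qed

lemma I_restr_BD_d:
  assumes "\<delta> \<in> BD_Gamma G" "BD_level G \<delta> \<le> q"
  shows "I q (restr (G q) (BD_d G I \<delta>)) = BD_d G I \<delta>"
proof (cases "BD_level G \<delta> = q")
  case True
  have "restr (G q) (BD_d G I \<delta>) = (\<lambda>\<eta>. if \<eta> = \<delta> then 1 else 0)"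
    using True BD_d_below_level[OF assms(1)] BD_level_in[OF assms(1)] by (auto simp: restr_def)
  then show ?thesis using True by (simp add: BD_d_def)
next
  case False
  then have "BD_level G \<delta> < q" using assms(2) by simp
  moreover have "supported (G (BD_level G \<delta>)) (\<lambda>\<eta>. if \<eta> = \<delta> then 1 else 0)"
    using BD_level_in[OF assms(1)] by (simp add: supported_def)
  ultimately show ?thesis unfolding BD_d_def by (rule I_compatible[symmetric])
qed

sublocale BD_system G I
proof
  fix \<delta> assume \<delta>: "\<delta> \<in> BD_Gamma G"
  obtain K where K: "\<And>q x B \<eta>. supported (G q) x \<Longrightarrow> (\<And>\<zeta>. \<bar>x \<zeta>\<bar> \<le> B) \<Longrightarrow> \<bar>I q x \<eta>\<bar> \<le> K * B"
    using I_bounded by metis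
  have "supported (G (BD_level G \<delta>)) (\<lambda>\<eta>. if \<eta> = \<delta> then 1 else 0)"
    using BD_level_in[OF \<delta>] by (simp add: supported_def)
  from K[OF this, where B=1] have "\<bar>BD_d G I \<delta> \<eta>\<bar> \<le> K * 1" for \<eta>
    unfolding BD_d_def by simp
  then show "bdd_fun (BD_d G I \<delta>)" unfolding bdd_fun_def by blast
qed

lemma is_BD_dstar_BD_dstar:
  assumes \<gamma>: "\<gamma> \<in> BD_Gamma G"
  shows "is_BD_dstar G I \<gamma> (BD_dstar G I \<gamma>)"
proof -
  txt \<open>With levels counted from 0, \<open>d\<^sup>*\<^sub>\<gamma> = e\<^sup>*\<^sub>\<gamma> - e\<^sup>*\<^sub>\<gamma> \<circ> i\<^sub>p \<circ> r\<^sub>p\<close> for \<open>\<gamma>\<close> of level \<open>p + 1\<close>,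
    and \<open>d\<^sup>*\<^sub>\<gamma> = e\<^sup>*\<^sub>\<gamma>\<close> at level 0.\<close>
  define p where "p = BD_level G \<gamma> - 1"
  define h where "h x = (if BD_level G \<gamma> = 0 then 0 else I p (restr (G p) x) \<gamma>)" for x
  obtain K where "K \<ge> 0"
    and K: "\<And>q x B \<eta>. supported (G q) x \<Longrightarrow> (\<And>\<zeta>. \<bar>x \<zeta>\<bar> \<le> B) \<Longrightarrow> \<bar>I q x \<eta>\<bar> \<le> K * B"
    using I_bounded by metis
  have h_bound: "\<bar>h x\<bar> \<le> K * supn x" if "x \<in> BD_space G I" for x
  proof -
    have "bdd_fun x" using bdd_fun_BD_space[OF that] .
    then have "\<bar>restr (G p) x \<zeta>\<bar> \<le> supn x" for \<zeta>
      using abs_le_supn[of x \<zeta>] supn_nonneg[of x] by (simp add: restr_def)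
    then show ?thesis
      using K[OF supported_restr] \<open>K \<ge> 0\<close> supn_nonneg[OF \<open>bdd_fun x\<close>] by (simp add: h_def)
  qed
  have h: "bounded_linear_functional_on (BD_space G I) h"
    by (intro bounded_linear_functional_onI[where C=K] h_bound)
      (simp_all add: h_def restr_add restr_scale I_add[OF supported_restr supported_restr]
        I_scale[OF supported_restr])
  have h_BD_d: "h (BD_d G I \<delta>) = (if BD_level G \<delta> < BD_level G \<gamma> then BD_d G I \<delta> \<gamma> else 0)"
    if \<delta>: "\<delta> \<in> BD_Gamma G" for \<delta>
    using I_restr_BD_d[OF \<delta>, of p] restr_BD_d_below_level[OF \<delta>, of p]
    by (auto simp: h_def p_def I_zero)
  define f where "f x = (if x \<in> BD_space G I then x \<gamma> - h x else 0)" for x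
  have "is_BD_dstar G I \<gamma> f"
    unfolding is_BD_dstar_def
  proof (intro conjI ballI allI impI)
    show "bounded_linear_functional_on (BD_space G I) f"
      unfolding f_def
      by (intro bounded_linear_functional_on_zero_outside bounded_linear_functional_on_diff
          bounded_linear_functional_on_eval h bounded_function_space_BD_space)
    show "f (BD_d G I \<delta>) = (if \<delta> = \<gamma> then 1 else 0)" if \<delta>: "\<delta> \<in> BD_Gamma G" for \<delta>
      using BD_d_below_level[OF \<delta>, of \<gamma>] mem_G_iff_BD_level_le[OF \<gamma>, of "BD_level G \<delta>"]
      by (auto simp: f_def h_BD_d[OF \<delta>] BD_d_in_space[OF \<delta>])
  qed (simp add: f_def)
  then show ?thesis using BD_dstar_eqI by simp
qed

lemma BD_dstar_BD_d:
  "\<gamma> \<in> BD_Gamma G \<Longrightarrow> \<delta> \<in> BD_Gamma G \<Longrightarrow> BD_dstar G I \<gamma> (BD_d G I \<delta>) = (if \<delta> = \<gamma> then 1 else 0)"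
  using is_BD_dstar_BD_dstar unfolding is_BD_dstar_def by blast

lemma BD_proj_BD_d:
  assumes "finite E \<or> finite (- E)" "\<delta> \<in> BD_Gamma G"
  shows "BD_proj G I E (BD_d G I \<delta>) = (if BD_level G \<delta> \<in> E then BD_d G I \<delta> else (\<lambda>_. 0))"
  using is_BD_proj_BD_proj[OF is_BD_dstar_BD_dstar finite_G assms(1)] assms(2)
  unfolding is_BD_proj_def by blast

end

section \<open>The space determined by a self-determined set\<close>

lemma nat_interval_finite_or_cofinite:
  assumes "nat_interval E"
  shows "finite E \<or> finite (- E)"
proof (cases "finite E")
  case False
  then obtain a where a: "a \<in> E" by (metis finite.emptyI ex_in_conv)
  have "- E \<subseteq> {..<a}"
  proof
    fix n assume n: "n \<in> - E"
    obtain c where "c \<in> E" "n \<le> c"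
      using False infinite_nat_iff_unbounded_le by blast
    with n a assms show "n \<in> {..<a}"
      unfolding nat_interval_def by (meson Compl_iff lessThan_iff not_le_imp_less)
  qed
  then show ?thesis using finite_subset by blast
qed simp

lemma finite_or_cofinite_vimage:
  assumes "inj f" "finite E \<or> finite (- E)"
  shows "finite (f -` E) \<or> finite (- (f -` E))"
  using assms finite_vimageI[OF _ assms(1)] by (auto simp: vimage_Compl[symmetric])

locale self_determined_BD = Bourgain_Delbaen +
  fixes \<Gamma>' :: "'a set"
  assumes self_determined: "self_determined G I \<Gamma>'"
begin

lemma Gamma'_subset: "\<Gamma>' \<subseteq> BD_Gamma G"
  using self_determined by (simp add: self_determined_def)

lemma mem_BD_Gamma_if_Gamma': "\<delta> \<in> \<Gamma>' \<Longrightarrow> \<delta> \<in> BD_Gamma G"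
  using Gamma'_subset by blast

lemma infinite_Gamma': "infinite \<Gamma>'"
  using self_determined by (simp add: self_determined_def)

lemma BD_dstar_self_determined:
  assumes "\<gamma> \<in> \<Gamma>'"
  obtains F a where "finite F" "F \<subseteq> \<Gamma>'"
    "\<And>x. x \<in> BD_space G I \<Longrightarrow> BD_dstar G I \<gamma> x = (\<Sum>\<eta>\<in>F. a \<eta> * x \<eta>)"
  using self_determined assms unfolding self_determined_def by metis

lemma BD_level_mem_sd_levels:
  "\<delta> \<in> \<Gamma>' \<Longrightarrow> BD_level G \<delta> \<in> {q. \<Gamma>' \<inter> BD_Delta G q \<noteq> {}}"
  using BD_level_in_Delta[of \<delta> G] Gamma'_subset by auto

lemma infinite_sd_levels: "infinite {q. \<Gamma>' \<inter> BD_Delta G q \<noteq> {}}"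
proof
  assume fin: "finite {q. \<Gamma>' \<inter> BD_Delta G q \<noteq> {}}"
  have "\<Gamma>' \<subseteq> (\<Union>q\<in>{q. \<Gamma>' \<inter> BD_Delta G q \<noteq> {}}. G q)"
  proof
    fix \<delta> assume \<delta>: "\<delta> \<in> \<Gamma>'"
    show "\<delta> \<in> (\<Union>q\<in>{q. \<Gamma>' \<inter> BD_Delta G q \<noteq> {}}. G q)"
      by (rule UN_I[where B=G, OF BD_level_mem_sd_levels[OF \<delta>] BD_level_in[OF mem_BD_Gamma_if_Gamma'[OF \<delta>]]])
  qed
  moreover have "finite (\<Union>q\<in>{q. \<Gamma>' \<inter> BD_Delta G q \<noteq> {}}. G q)"
    using fin finite_G by simp
  ultimately show False using infinite_Gamma' by (meson finite_subset)
qed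

lemma sd_q_le_iff: "sd_q G \<Gamma>' s \<le> sd_q G \<Gamma>' t \<longleftrightarrow> s \<le> t"
  unfolding sd_q_def by (rule enumerate_mono_le_iff[OF infinite_sd_levels])

lemma inj_sd_q: "inj (sd_q G \<Gamma>')"
  unfolding sd_q_def by (rule inj_enumerate[OF infinite_sd_levels])

lemma ex_sd_q_eq_BD_level: "\<delta> \<in> \<Gamma>' \<Longrightarrow> \<exists>s. sd_q G \<Gamma>' s = BD_level G \<delta>"
  unfolding sd_q_def by (rule enumerate_Ex[OF infinite_sd_levels BD_level_mem_sd_levels])

lemma mem_sd_G_BD_level:
  assumes "\<delta> \<in> \<Gamma>'" "sd_q G \<Gamma>' s = BD_level G \<delta>"
  shows "\<delta> \<in> sd_G G \<Gamma>' s"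
  using assms BD_level_in[OF mem_BD_Gamma_if_Gamma'[OF assms(1)]] by (simp add: sd_G_def)

lemma sd_q_BD_level:
  assumes \<delta>: "\<delta> \<in> \<Gamma>'"
  shows "sd_q G \<Gamma>' (BD_level (sd_G G \<Gamma>') \<delta>) = BD_level G \<delta>"
proof -
  obtain s where s: "sd_q G \<Gamma>' s = BD_level G \<delta>"
    using ex_sd_q_eq_BD_level[OF \<delta>] by blast
  have "BD_level (sd_G G \<Gamma>') \<delta> = s"
    unfolding BD_level_def
  proof (rule Least_equality)
    show "\<delta> \<in> sd_G G \<Gamma>' s" by (rule mem_sd_G_BD_level[OF \<delta> s])
    show "s \<le> t" if "\<delta> \<in> sd_G G \<Gamma>' t" for t
      using that BD_level_le[of \<delta> G "sd_q G \<Gamma>' t"] s sd_q_le_iff[of s t] by (simp add: sd_G_def)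
  qed
  then show ?thesis using s by simp
qed

lemma BD_Gamma_sd: "BD_Gamma (sd_G G \<Gamma>') = \<Gamma>'"
proof
  show "BD_Gamma (sd_G G \<Gamma>') \<subseteq> \<Gamma>'" unfolding BD_Gamma_def sd_G_def by blast
  show "\<Gamma>' \<subseteq> BD_Gamma (sd_G G \<Gamma>')"
  proof
    fix \<delta> assume \<delta>: "\<delta> \<in> \<Gamma>'"
    obtain s where "sd_q G \<Gamma>' s = BD_level G \<delta>" using ex_sd_q_eq_BD_level[OF \<delta>] by blast
    from mem_sd_G_BD_level[OF \<delta> this] show "\<delta> \<in> BD_Gamma (sd_G G \<Gamma>')" by (rule mem_BD_Gamma)
  qed
qed

lemma BD_d_sd: "\<delta> \<in> \<Gamma>' \<Longrightarrow> BD_d (sd_G G \<Gamma>') (sd_I G I \<Gamma>') \<delta> = restr \<Gamma>' (BD_d G I \<delta>)"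
  unfolding BD_d_def sd_I_def by (simp only: sd_q_BD_level)

sublocale sd: BD_system "sd_G G \<Gamma>'" "sd_I G I \<Gamma>'"
proof
  fix \<delta> assume "\<delta> \<in> BD_Gamma (sd_G G \<Gamma>')"
  then have \<delta>: "\<delta> \<in> \<Gamma>'" by (simp add: BD_Gamma_sd)
  show "bdd_fun (BD_d (sd_G G \<Gamma>') (sd_I G I \<Gamma>') \<delta>)"
    unfolding BD_d_sd[OF \<delta>] by (rule bdd_fun_restr[OF bdd_fun_BD_d[OF mem_BD_Gamma_if_Gamma'[OF \<delta>]]])
qed

lemma is_BD_dstar_sd:
  assumes \<gamma>: "\<gamma> \<in> \<Gamma>'"
  shows "is_BD_dstar (sd_G G \<Gamma>') (sd_I G I \<Gamma>') \<gamma> (BD_dstar (sd_G G \<Gamma>') (sd_I G I \<Gamma>') \<gamma>)"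
proof -
  obtain F a where F: "finite F" "F \<subseteq> \<Gamma>'"
    and dstar: "\<And>x. x \<in> BD_space G I \<Longrightarrow> BD_dstar G I \<gamma> x = (\<Sum>\<eta>\<in>F. a \<eta> * x \<eta>)"
    using BD_dstar_self_determined[OF \<gamma>] by blast
  define f where
    "f x = (if x \<in> BD_space (sd_G G \<Gamma>') (sd_I G I \<Gamma>') then \<Sum>\<eta>\<in>F. a \<eta> * x \<eta> else 0)" for x
  have "is_BD_dstar (sd_G G \<Gamma>') (sd_I G I \<Gamma>') \<gamma> f"
    unfolding is_BD_dstar_def
  proof (intro conjI ballI allI impI)
    show "bounded_linear_functional_on (BD_space (sd_G G \<Gamma>') (sd_I G I \<Gamma>')) f"
      unfolding f_def
      by (intro bounded_linear_functional_on_zero_outside bounded_linear_functional_on_sum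
          bounded_linear_functional_on_eval sd.bounded_function_space_BD_space F)
    fix \<delta> assume "\<delta> \<in> BD_Gamma (sd_G G \<Gamma>')"
    then have \<delta>: "\<delta> \<in> \<Gamma>'" by (simp add: BD_Gamma_sd)
    have "f (BD_d (sd_G G \<Gamma>') (sd_I G I \<Gamma>') \<delta>) = (\<Sum>\<eta>\<in>F. a \<eta> * BD_d G I \<delta> \<eta>)"
      using F(2) sd.BD_d_in_space[of \<delta>] \<delta>
      by (auto simp: f_def BD_d_sd BD_Gamma_sd restr_def subset_iff intro!: sum.cong)
    also have "\<dots> = BD_dstar G I \<gamma> (BD_d G I \<delta>)"
      using dstar BD_d_in_space mem_BD_Gamma_if_Gamma'[OF \<delta>] by auto
    also have "\<dots> = (if \<delta> = \<gamma> then 1 else 0)"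
      by (rule BD_dstar_BD_d[OF mem_BD_Gamma_if_Gamma'[OF \<gamma>] mem_BD_Gamma_if_Gamma'[OF \<delta>]])
    finally show "f (BD_d (sd_G G \<Gamma>') (sd_I G I \<Gamma>') \<delta>) = (if \<delta> = \<gamma> then 1 else 0)" .
  qed (simp add: f_def)
  then show ?thesis using sd.BD_dstar_eqI by simp
qed

lemma is_BD_proj_sd:
  "finite E \<or> finite (- E) \<Longrightarrow>
    is_BD_proj (sd_G G \<Gamma>') (sd_I G I \<Gamma>') E (BD_proj (sd_G G \<Gamma>') (sd_I G I \<Gamma>') E)"
  using sd.is_BD_proj_BD_proj is_BD_dstar_sd finite_G by (simp add: BD_Gamma_sd sd_G_def)

lemma BD_cstar_sd_BD_d:
  assumes "\<gamma> \<in> \<Gamma>'" "\<delta> \<in> \<Gamma>'"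
  shows "BD_cstar (sd_G G \<Gamma>') (sd_I G I \<Gamma>') \<gamma> (BD_d (sd_G G \<Gamma>') (sd_I G I \<Gamma>') \<delta>) =
    BD_cstar G I \<gamma> (BD_d G I \<delta>)"
  using assms is_BD_dstar_sd[OF assms(1)] BD_dstar_BD_d[OF mem_BD_Gamma_if_Gamma' mem_BD_Gamma_if_Gamma']
  by (auto simp: BD_cstar_def is_BD_dstar_def BD_Gamma_sd BD_d_sd restr_def)

lemma finite_or_cofinite_sd_levels:
  "finite E \<or> finite (- E) \<Longrightarrow> finite {s. sd_q G \<Gamma>' s \<in> E} \<or> finite (- {s. sd_q G \<Gamma>' s \<in> E})"
  using finite_or_cofinite_vimage[OF inj_sd_q] by (simp add: vimage_def)

lemma BD_proj_sd_BD_d: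
  assumes "\<delta> \<in> \<Gamma>'" "\<eta> \<in> \<Gamma>'" "finite E \<or> finite (- E)"
  shows "BD_proj (sd_G G \<Gamma>') (sd_I G I \<Gamma>') {s. sd_q G \<Gamma>' s \<in> E} (BD_d (sd_G G \<Gamma>') (sd_I G I \<Gamma>') \<delta>) \<eta> =
    BD_proj G I E (BD_d G I \<delta>) \<eta>"
  using assms is_BD_proj_sd[OF finite_or_cofinite_sd_levels[OF assms(3)]]
    BD_proj_BD_d[OF assms(3) mem_BD_Gamma_if_Gamma'[OF assms(1)]]
  by (auto simp: is_BD_proj_def BD_Gamma_sd BD_d_sd sd_q_BD_level restr_def)

lemma bounded_linear_functional_on_BD_cstar_sd:
  assumes "\<gamma> \<in> \<Gamma>'"
  shows "bounded_linear_functional_on (BD_space (sd_G G \<Gamma>') (sd_I G I \<Gamma>')) (BD_cstar (sd_G G \<Gamma>') (sd_I G I \<Gamma>') \<gamma>)"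
  unfolding BD_cstar_def
  using is_BD_dstar_sd[OF assms] sd.bounded_function_space_BD_space
  by (simp add: is_BD_dstar_def bounded_linear_functional_on_diff bounded_linear_functional_on_eval)

lemma bounded_linear_functional_on_sum_BD_proj_sd:
  assumes "finite F" "\<And>\<eta>. \<eta> \<in> F \<Longrightarrow> finite (E \<eta>) \<or> finite (- E \<eta>)"
  shows "bounded_linear_functional_on (BD_space (sd_G G \<Gamma>') (sd_I G I \<Gamma>'))
    (\<lambda>x. \<Sum>\<eta>\<in>F. lam \<eta> * BD_proj (sd_G G \<Gamma>') (sd_I G I \<Gamma>') {s. sd_q G \<Gamma>' s \<in> E \<eta>} x \<eta>)"
proof (rule bounded_linear_functional_on_sum[OF assms(1) _ sd.bounded_function_space_BD_space])
  fix \<eta> assume "\<eta> \<in> F"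
  then show "bounded_linear_functional_on (BD_space (sd_G G \<Gamma>') (sd_I G I \<Gamma>'))
      (\<lambda>x. BD_proj (sd_G G \<Gamma>') (sd_I G I \<Gamma>') {s. sd_q G \<Gamma>' s \<in> E \<eta>} x \<eta>)"
    using is_BD_proj_sd[OF finite_or_cofinite_sd_levels[OF assms(2)]]
    by (simp add: is_BD_proj_def bounded_linear_functional_on_coordinate)
qed

lemma BD_cstar_sd_eq_sum_BD_proj:
  assumes \<gamma>: "\<gamma> \<in> \<Gamma>'" and F: "finite F" "F \<subseteq> \<Gamma>'"
    and E: "\<And>\<eta>. \<eta> \<in> F \<Longrightarrow> finite (E \<eta>) \<or> finite (- E \<eta>)"
    and cstar: "\<forall>x\<in>BD_space G I. BD_cstar G I \<gamma> x = (\<Sum>\<eta>\<in>F. lam \<eta> * BD_proj G I (E \<eta>) x \<eta>)"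
    and x: "x \<in> BD_space (sd_G G \<Gamma>') (sd_I G I \<Gamma>')"
  shows "BD_cstar (sd_G G \<Gamma>') (sd_I G I \<Gamma>') \<gamma> x =
    (\<Sum>\<eta>\<in>F. lam \<eta> * BD_proj (sd_G G \<Gamma>') (sd_I G I \<Gamma>') {s. sd_q G \<Gamma>' s \<in> E \<eta>} x \<eta>)"
proof (rule sd.bounded_linear_functional_on_BD_space_eqI[OF bounded_linear_functional_on_BD_cstar_sd[OF \<gamma>]
      bounded_linear_functional_on_sum_BD_proj_sd[OF F(1) E] _ x])
  fix \<delta> assume "\<delta> \<in> BD_Gamma (sd_G G \<Gamma>')"
  then have \<delta>: "\<delta> \<in> \<Gamma>'" by (simp add: BD_Gamma_sd)
  have "BD_cstar (sd_G G \<Gamma>') (sd_I G I \<Gamma>') \<gamma> (BD_d (sd_G G \<Gamma>') (sd_I G I \<Gamma>') \<delta>) =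
      BD_cstar G I \<gamma> (BD_d G I \<delta>)"
    by (rule BD_cstar_sd_BD_d[OF \<gamma> \<delta>])
  also have "\<dots> = (\<Sum>\<eta>\<in>F. lam \<eta> * BD_proj G I (E \<eta>) (BD_d G I \<delta>) \<eta>)"
    using cstar BD_d_in_space[OF mem_BD_Gamma_if_Gamma'[OF \<delta>]] by blast
  also have "\<dots> = (\<Sum>\<eta>\<in>F. lam \<eta> *
      BD_proj (sd_G G \<Gamma>') (sd_I G I \<Gamma>') {s. sd_q G \<Gamma>' s \<in> E \<eta>} (BD_d (sd_G G \<Gamma>') (sd_I G I \<Gamma>') \<delta>) \<eta>)"
    using F(2) E by (intro sum.cong refl) (simp add: BD_proj_sd_BD_d[OF \<delta>] subset_iff)
  finally show "BD_cstar (sd_G G \<Gamma>') (sd_I G I \<Gamma>') \<gamma> (BD_d (sd_G G \<Gamma>') (sd_I G I \<Gamma>') \<delta>) =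
      (\<Sum>\<eta>\<in>F. lam \<eta> *
        BD_proj (sd_G G \<Gamma>') (sd_I G I \<Gamma>') {s. sd_q G \<Gamma>' s \<in> E \<eta>} (BD_d (sd_G G \<Gamma>') (sd_I G I \<Gamma>') \<delta>) \<eta>)" .
qed

end

theorem proposition1p13:
  fixes G :: "nat \<Rightarrow> 'a set"
    and I :: "nat \<Rightarrow> ('a \<Rightarrow> real) \<Rightarrow> ('a \<Rightarrow> real)"
    and \<Gamma>' :: "'a set" and \<gamma> :: 'a and F :: "'a set"
    and lam :: "'a \<Rightarrow> real" and E :: "'a \<Rightarrow> nat set"
  assumes "BD_datum G I"
    and "self_determined G I \<Gamma>'"
    and "\<gamma> \<in> \<Gamma>'"
    and "finite F" and "F \<subseteq> \<Gamma>'"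
    and "\<forall>\<eta>\<in>F. nat_interval (E \<eta>)"
    and "\<forall>x\<in>BD_space G I.
           BD_cstar G I \<gamma> x = (\<Sum>\<eta>\<in>F. lam \<eta> * BD_proj G I (E \<eta>) x \<eta>)"
  shows "\<forall>x\<in>BD_space (sd_G G \<Gamma>') (sd_I G I \<Gamma>').
           BD_cstar (sd_G G \<Gamma>') (sd_I G I \<Gamma>') \<gamma> x =
             (\<Sum>\<eta>\<in>F. lam \<eta> * BD_proj (sd_G G \<Gamma>') (sd_I G I \<Gamma>') {s. sd_q G \<Gamma>' s \<in> E \<eta>} x \<eta>)"
proof
  interpret self_determined_BD G I \<Gamma>'
    by unfold_locales (fact assms)+
  have "finite (E \<eta>) \<or> finite (- E \<eta>)" if "\<eta> \<in> F" for \<eta>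
    using assms(6) that nat_interval_finite_or_cofinite by blast
  then show "BD_cstar (sd_G G \<Gamma>') (sd_I G I \<Gamma>') \<gamma> x =
      (\<Sum>\<eta>\<in>F. lam \<eta> * BD_proj (sd_G G \<Gamma>') (sd_I G I \<Gamma>') {s. sd_q G \<Gamma>' s \<in> E \<eta>} x \<eta>)"
    if "x \<in> BD_space (sd_G G \<Gamma>') (sd_I G I \<Gamma>')" for x
    by (rule BD_cstar_sd_eq_sum_BD_proj[OF assms(3,4,5) _ assms(7) that])
qed

end
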